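(* Let $n\in\mathbb{N}$, $\varkappa\in\mathbb{N}^n$, $N=|\varkappa|$, and $\lambda$ a partition of length $\le N$. Then \[ G_\lambda(y,\varkappa)=J_\lambda\bigl(y^{[\varkappa]}\bigr)\,M(y,\varkappa). \]
   Context: $\hom_m$, $\operatorname{e}_m$: complete homogeneous and elementary symmetric polynomials, zero for negative degree (and $\operatorname{e}_m=0$ when $m$ exceeds the number of variables). Partitions are extended by zeros to length $N$. For a list of nonnegative integers $\mu$, $y^{[\mu]}$ is the list in which $y_1$ is repeated $\mu_1$ times, then $y_2$ repeated $\mu_2$ times, etc.; $b_q$ is the $q$th standard unit vector in $\mathbb{Z}^n$. Each $p\in\{1,\ldots,N\}$ is written uniquely as $p=\varkappa_1+\cdots+\varkappa_{q-1}+r$ with $1\le q\le n$, $1\le r\le\varkappa_q$. Definitions (all $N\times N$, indices in $\{1,\ldots,N\}$, $(q,r)$ associated to $p$): $J_\lambda(x)=[\hom_{\lambda_j-j+k}(x)]_{j,k=1}^N$ (Jacobi–Trudi matrix); $M(y,\varkappa)_{k,p}=(-1)^{N-k-r+1}\operatorname{e}_{N-k-r+1}\bigl(y^{[\varkappa-rb_q]}\bigr)$; $G_\lambda(y,\varkappa)_{j,p}=\binom{N+\lambda_j-j}{r-1}y_q^{N+\lambda_j-j-r+1}$ if $N+\lambda_j-j-r+1\ge0$, and $0$ otherwise. *)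

theory Defs
  imports "HOL-Library.FuncSet"
begin

definition hom :: "int \<Rightarrow> 'a::comm_ring_1 list \<Rightarrow> 'a" where
  "hom m xs = (if m < 0 then 0 else
     (\<Sum>f\<in>{f. f \<in> {..<length xs} \<rightarrow>\<^sub>E {0..nat m} \<and> sum f {..<length xs} = nat m}.
        \<Prod>i<length xs. xs ! i ^ f i))"

text \<open>Elementary symmetric polynomial of degree m evaluated at xs; zero for negative degree
  and (automatically) for degree exceeding the number of variables.\<close>
definition elem :: "int \<Rightarrow> 'a::comm_ring_1 list \<Rightarrow> 'a" where
  "elem m xs = (if m < 0 then 0 else
     (\<Sum>S\<in>{S. S \<subseteq> {..<length xs} \<and> card S = nat m}. \<Prod>i\<in>S. xs ! i))"

text \<open>y^[mu]: y_1 repeated mu_1 times, ..., y_n repeated mu_n times (1-based indices).\<close>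
definition rep_list :: "nat \<Rightarrow> (nat \<Rightarrow> 'a) \<Rightarrow> (nat \<Rightarrow> nat) \<Rightarrow> 'a list" where
  "rep_list n y mu = concat (map (\<lambda>q. replicate (mu q) (y q)) [1..<Suc n])"

definition qr :: "nat \<Rightarrow> (nat \<Rightarrow> nat) \<Rightarrow> nat \<Rightarrow> nat \<times> nat" where
  "qr n kappa p = (THE (q, r). 1 \<le> q \<and> q \<le> n \<and> 1 \<le> r \<and> r \<le> kappa q \<and>
                      p = sum kappa {1..<q} + r)"

definition is_partition_len_le :: "nat \<Rightarrow> (nat \<Rightarrow> nat) \<Rightarrow> bool" where
  "is_partition_len_le N lam \<longleftrightarrow>
     (\<forall>i j. 1 \<le> i \<longrightarrow> i \<le> j \<longrightarrow> lam j \<le> lam i) \<and> (\<forall>j>N. lam j = 0)"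

definition JT :: "(nat \<Rightarrow> nat) \<Rightarrow> 'a::comm_ring_1 list \<Rightarrow> nat \<Rightarrow> nat \<Rightarrow> 'a" where
  "JT lam x j k = hom (int (lam j) - int j + int k) x"

definition Mmat :: "nat \<Rightarrow> (nat \<Rightarrow> 'a::comm_ring_1) \<Rightarrow> (nat \<Rightarrow> nat) \<Rightarrow> nat \<Rightarrow> nat \<Rightarrow> 'a" where
  "Mmat n y kappa k p =
     (let N = sum kappa {1..n}; (q, r) = qr n kappa p;
          d = int N - int k - int r + 1
      in (-1) ^ nat d * elem d (rep_list n y (kappa(q := kappa q - r))))"

definition Gmat :: "nat \<Rightarrow> (nat \<Rightarrow> nat) \<Rightarrow> (nat \<Rightarrow> 'a::comm_ring_1) \<Rightarrow> (nat \<Rightarrow> nat) \<Rightarrow> nat \<Rightarrow> nat \<Rightarrow> 'a" where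
  "Gmat n lam y kappa j p =
     (let N = sum kappa {1..n}; (q, r) = qr n kappa p;
          d = int N + int (lam j) - int j - int r + 1
      in if d \<ge> 0 then of_nat ((N + lam j - j) choose (r - 1)) * y q ^ nat d else 0)"

end

theory Submission
  imports Defs "HOL-Computational_Algebra.Formal_Power_Series" "HOL-Library.Multiset"
begin

text \<open>
  Let \<open>H(x; t) = \<Sum>\<^sub>m h\<^sub>m(x) t^m\<close> and \<open>E(x; t) = \<Sum>\<^sub>m e\<^sub>m(x) t^m\<close>.  Both \<open>E(x; -t)\<close> and
  \<open>1 / H(x; t)\<close> equal \<open>\<Prod>\<^sub>i (1 - x\<^sub>i t)\<close>.  If \<open>p\<close> corresponds to \<open>(q, r)\<close>, the list
  \<open>y^[\<kappa> - r b\<^sub>q]\<close> is \<open>y^[\<kappa>]\<close> with \<open>r\<close> copies of \<open>y\<^sub>q\<close> removed, hence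
  \<open>E(y^[\<kappa> - r b\<^sub>q]; -t) H(y^[\<kappa>]; t) = (1 - y\<^sub>q t)^(-r) = \<Sum>\<^sub>d (d + r - 1 choose r - 1) y\<^sub>q^d t^d\<close>.
  The \<open>(j, p)\<close> entry of \<open>J\<^sub>\<lambda> M\<close> is the coefficient of \<open>t^(N + \<lambda>\<^sub>j - j - r + 1)\<close> in this
  product, because the summation range \<open>k = 1..N\<close> covers every nonzero term of the convolution.
\<close>

unbundle fps_syntax

section \<open>Weak compositions and complete homogeneous polynomials\<close>

definition weak_compositions :: "nat \<Rightarrow> nat \<Rightarrow> (nat \<Rightarrow> nat) set" where
  "weak_compositions L m = {f. f \<in> {..<L} \<rightarrow>\<^sub>E {0..m} \<and> sum f {..<L} = m}"

lemma hom_eq_sum_weak_compositions: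
  "hom (int m) xs = (\<Sum>f\<in>weak_compositions (length xs) m. \<Prod>i<length xs. xs ! i ^ f i)"
  by (simp add: hom_def weak_compositions_def)

lemma finite_weak_compositions: "finite (weak_compositions L m)"
  by (rule finite_subset[of _ "{..<L} \<rightarrow>\<^sub>E {0..m}"])
     (auto simp: weak_compositions_def intro: finite_PiE)

lemma weak_compositions_0: "weak_compositions 0 m = (if m = 0 then {\<lambda>_. undefined} else {})"
  by (auto simp: weak_compositions_def)

lemma weak_composition_le:
  "f \<in> weak_compositions L m \<Longrightarrow> i < L \<Longrightarrow> f i \<le> m"
  by (auto simp: weak_compositions_def PiE_def Pi_def)

lemma weak_compositions_Suc_fiber:
  assumes "a \<le> m"
  shows "{f \<in> weak_compositions (Suc L) m. f L = a} = (\<lambda>g. g(L := a)) ` weak_compositions L (m - a)"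
proof (intro equalityI subsetI)
  fix f assume "f \<in> {f \<in> weak_compositions (Suc L) m. f L = a}"
  then have f: "f \<in> {..<Suc L} \<rightarrow>\<^sub>E {0..m}" "sum f {..<Suc L} = m" "f L = a"
    by (simp_all add: weak_compositions_def)
  then have sum_f: "sum f {..<L} = m - a" by simp
  have "f i \<le> m - a" if "i < L" for i
    using member_le_sum[of i "{..<L}" f] that sum_f by simp
  then have "restrict f {..<L} \<in> {..<L} \<rightarrow>\<^sub>E {0..m - a}"
    by (simp add: PiE_iff)
  moreover have "sum (restrict f {..<L}) {..<L} = m - a"
    using sum_f by simp
  ultimately have "restrict f {..<L} \<in> weak_compositions L (m - a)"
    by (simp add: weak_compositions_def)
  moreover have "f = (restrict f {..<L})(L := a)"
  proof
    fix i
    consider "i < L" | "i = L" | "L < i" by linarith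
    then show "f i = ((restrict f {..<L})(L := a)) i"
      using f(3) PiE_arb[OF f(1)] by cases auto
  qed
  ultimately show "f \<in> (\<lambda>g. g(L := a)) ` weak_compositions L (m - a)" by blast
next
  fix f assume "f \<in> (\<lambda>g. g(L := a)) ` weak_compositions L (m - a)"
  then obtain g where g: "g \<in> weak_compositions L (m - a)" and f: "f = g(L := a)" by blast
  have "sum f {..<L} = sum g {..<L}" by (intro sum.cong) (auto simp: f)
  then have "sum f {..<Suc L} = m" using g assms by (simp add: weak_compositions_def f)
  moreover have "f i \<in> {0..m}" if "i < Suc L" for i
    using weak_composition_le[OF g, of i] assms that by (auto simp: f less_Suc_eq)
  moreover have "f \<in> extensional {..<Suc L}"
    using g by (auto simp: f weak_compositions_def PiE_iff extensional_def)
  ultimately show "f \<in> {f \<in> weak_compositions (Suc L) m. f L = a}"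
    by (simp add: weak_compositions_def f PiE_iff)
qed

lemma sum_weak_compositions_Suc:
  "sum g (weak_compositions (Suc L) m) = (\<Sum>a\<le>m. \<Sum>f\<in>weak_compositions L (m - a). g (f(L := a)))"
proof -
  have "(\<lambda>f. f L) ` weak_compositions (Suc L) m \<subseteq> {..m}"
    by (auto dest: weak_composition_le)
  then have "sum g (weak_compositions (Suc L) m) =
      (\<Sum>a\<le>m. sum g {f \<in> weak_compositions (Suc L) m. f L = a})"
    by (intro sum.group[symmetric] finite_weak_compositions) auto
  also have "\<dots> = (\<Sum>a\<le>m. \<Sum>f\<in>weak_compositions L (m - a). g (f(L := a)))"
  proof (rule sum.cong[OF refl])
    fix a assume "a \<in> {..m}"
    have "inj_on (\<lambda>h. h(L := a)) (weak_compositions L (m - a))"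
      by (rule inj_on_inverseI[where g="\<lambda>f. restrict f {..<L}"])
         (auto simp: weak_compositions_def PiE_def extensional_def fun_eq_iff)
    then show "sum g {f \<in> weak_compositions (Suc L) m. f L = a} =
        (\<Sum>f\<in>weak_compositions L (m - a). g (f(L := a)))"
      using \<open>a \<in> {..m}\<close> by (simp add: weak_compositions_Suc_fiber sum.reindex)
  qed
  finally show ?thesis .
qed

lemma hom_Nil: "hom (int m) [] = (if m = 0 then 1 else 0)"
  using hom_eq_sum_weak_compositions[of m "[]"] by (cases "m = 0") (simp_all add: weak_compositions_0)

lemma hom_neg: "m < 0 \<Longrightarrow> hom m xs = 0"
  by (simp add: hom_def)

lemma hom_snoc: "hom (int m) (xs @ [c]) = (\<Sum>a\<le>m. c ^ a * hom (int (m - a)) xs)"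
proof -
  have "(\<Prod>i<length xs. (xs @ [c]) ! i ^ (f(length xs := a)) i) = (\<Prod>i<length xs. xs ! i ^ f i)"
    for f a by (intro prod.cong) (auto simp: nth_append)
  then show ?thesis
    by (simp add: hom_eq_sum_weak_compositions sum_weak_compositions_Suc sum_distrib_left
        mult.commute del: of_nat_diff)
qed

section \<open>Subsets of given size and elementary symmetric polynomials\<close>

definition subsets_of_card :: "nat \<Rightarrow> nat \<Rightarrow> nat set set" where
  "subsets_of_card L m = {S. S \<subseteq> {..<L} \<and> card S = m}"

lemma elem_eq_sum_subsets_of_card:
  "elem (int m) xs = (\<Sum>S\<in>subsets_of_card (length xs) m. \<Prod>i\<in>S. xs ! i)"
  by (simp add: elem_def subsets_of_card_def)

lemma finite_subsets_of_card: "finite (subsets_of_card L m)"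
  by (rule finite_subset[of _ "Pow {..<L}"]) (auto simp: subsets_of_card_def)

lemma subsets_of_card_0: "subsets_of_card L 0 = {{}}"
  by (force simp: subsets_of_card_def card_eq_0_iff dest: finite_subset[OF _ finite_lessThan])

lemma subsets_of_card_empty: "L < m \<Longrightarrow> subsets_of_card L m = {}"
  by (auto simp: subsets_of_card_def dest!: card_mono[rotated, of _ "{..<L}"])

lemma sum_subsets_of_card_Suc:
  "sum g (subsets_of_card (Suc L) (Suc m)) =
     sum g (subsets_of_card L (Suc m)) + (\<Sum>T\<in>subsets_of_card L m. g (insert L T))"
proof -
  have without_L: "{S \<in> subsets_of_card (Suc L) (Suc m). L \<notin> S} = subsets_of_card L (Suc m)"
    by (auto simp: subsets_of_card_def less_Suc_eq)
  have with_L: "{S \<in> subsets_of_card (Suc L) (Suc m). L \<in> S} = insert L ` subsets_of_card L m"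
  proof (intro equalityI subsetI)
    fix S assume S: "S \<in> {S \<in> subsets_of_card (Suc L) (Suc m). L \<in> S}"
    then have "finite S" by (auto simp: subsets_of_card_def intro: finite_subset)
    with S have "S - {L} \<in> subsets_of_card L m" "S = insert L (S - {L})"
      by (auto simp: subsets_of_card_def less_Suc_eq)
    then show "S \<in> insert L ` subsets_of_card L m" by blast
  qed (auto simp: subsets_of_card_def intro: finite_subset card_insert_disjoint)
  have "inj_on (insert L) (subsets_of_card L m)"
    by (rule inj_on_inverseI[where g="\<lambda>S. S - {L}"]) (auto simp: subsets_of_card_def)
  then have "sum g {S \<in> subsets_of_card (Suc L) (Suc m). L \<in> S} =
      (\<Sum>T\<in>subsets_of_card L m. g (insert L T))"
    by (simp add: with_L sum.reindex)
  moreover have "sum g (subsets_of_card (Suc L) (Suc m)) =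
      sum g {S \<in> subsets_of_card (Suc L) (Suc m). L \<notin> S} +
      sum g {S \<in> subsets_of_card (Suc L) (Suc m). L \<in> S}"
    by (subst sum.union_disjoint[symmetric])
       (auto intro: finite_subset[OF _ finite_subsets_of_card] intro!: sum.cong)
  ultimately show ?thesis by (simp add: without_L)
qed

lemma elem_0: "elem 0 xs = 1"
  using elem_eq_sum_subsets_of_card[of 0 xs] by (simp add: subsets_of_card_0)

lemma elem_neg: "m < 0 \<Longrightarrow> elem m xs = 0"
  by (simp add: elem_def)

lemma elem_gt_length: "length xs < m \<Longrightarrow> elem (int m) xs = 0"
  by (simp add: elem_eq_sum_subsets_of_card subsets_of_card_empty)

lemma elem_snoc: "elem (int (Suc m)) (xs @ [c]) = elem (int (Suc m)) xs + c * elem (int m) xs"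
proof -
  have "(\<Prod>i\<in>S. (xs @ [c]) ! i) = (\<Prod>i\<in>S. xs ! i)" if "S \<in> subsets_of_card (length xs) k" for S k
    using that by (intro prod.cong) (auto simp: subsets_of_card_def nth_append)
  moreover have "(\<Prod>i\<in>insert (length xs) T. (xs @ [c]) ! i) = c * (\<Prod>i\<in>T. xs ! i)"
    if T: "T \<in> subsets_of_card (length xs) m" for T
  proof -
    have "finite T" "length xs \<notin> T" using T by (auto simp: subsets_of_card_def intro: finite_subset)
    with calculation[OF T] show ?thesis by simp
  qed
  ultimately show ?thesis
    unfolding elem_eq_sum_subsets_of_card length_append_singleton sum_subsets_of_card_Suc
    by (simp add: sum_distrib_left cong: sum.cong)
qed

section \<open>Generating functions\<close>

definition hom_fps :: "'a::comm_ring_1 list \<Rightarrow> 'a fps" where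
  "hom_fps xs = Abs_fps (\<lambda>m. hom (int m) xs)"

definition signed_elem_fps :: "'a::comm_ring_1 list \<Rightarrow> 'a fps" where
  "signed_elem_fps xs = Abs_fps (\<lambda>m. (-1) ^ m * elem (int m) xs)"

definition linear_factor :: "'a::comm_ring_1 \<Rightarrow> 'a fps" where
  "linear_factor c = 1 - fps_const c * fps_X"

text \<open>The series \<open>(1 - c X) ^ -(r + 1)\<close>, given by its coefficients since \<open>'a\<close> is only a ring.\<close>

definition linear_factor_inverse_power :: "nat \<Rightarrow> 'a::comm_ring_1 \<Rightarrow> 'a fps" where
  "linear_factor_inverse_power r c = Abs_fps (\<lambda>d. of_nat ((d + r) choose r) * c ^ d)"

lemma linear_factor_nth_0 [simp]: "linear_factor c $ 0 = 1"
  by (simp add: linear_factor_def)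

lemma fps_mult_linear_factor_nth:
  "(f * linear_factor c) $ n = f $ n - (if n = 0 then 0 else c * f $ (n - 1))"
proof -
  have "f * linear_factor c = f - fps_const c * (fps_X * f)"
    by (simp add: linear_factor_def algebra_simps)
  then show ?thesis by simp
qed

lemma linear_factor_inverse_power_0_mult: "linear_factor_inverse_power 0 c * linear_factor c = 1"
proof (rule fps_ext)
  fix n show "(linear_factor_inverse_power 0 c * linear_factor c) $ n = (1 :: 'a fps) $ n"
    by (cases n) (simp_all add: fps_mult_linear_factor_nth linear_factor_inverse_power_def)
qed

lemma linear_factor_inverse_power_Suc_mult:
  "linear_factor_inverse_power (Suc r) c * linear_factor c = linear_factor_inverse_power r c"
proof (rule fps_ext)
  fix n
  show "(linear_factor_inverse_power (Suc r) c * linear_factor c) $ n = linear_factor_inverse_power r c $ n"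
  proof (cases n)
    case (Suc k)
    have "Suc k + Suc r choose Suc r = (k + Suc r choose r) + (k + Suc r choose Suc r)"
      by simp
    then have "of_nat (Suc k + Suc r choose Suc r) * c ^ Suc k - c * (of_nat (k + Suc r choose Suc r) * c ^ k)
       = of_nat (Suc k + r choose r) * (c ^ Suc k :: 'a)"
      by (simp add: algebra_simps)
    then show ?thesis
      using Suc by (simp add: fps_mult_linear_factor_nth linear_factor_inverse_power_def)
  qed (simp add: linear_factor_inverse_power_def binomial_eq_0)
qed

lemma linear_factor_inverse_power_mult_power:
  "linear_factor_inverse_power r c * linear_factor c ^ Suc r = 1"
proof (induction r)
  case (Suc r)
  have "linear_factor_inverse_power (Suc r) c * linear_factor c ^ Suc (Suc r) =
      (linear_factor_inverse_power (Suc r) c * linear_factor c) * linear_factor c ^ Suc r"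
    by (simp add: algebra_simps)
  with Suc show ?case by (simp add: linear_factor_inverse_power_Suc_mult)
qed (simp add: linear_factor_inverse_power_0_mult)

lemma hom_fps_snoc: "hom_fps (xs @ [c]) = linear_factor_inverse_power 0 c * hom_fps xs"
  by (rule fps_ext)
     (simp add: hom_fps_def linear_factor_inverse_power_def hom_snoc fps_mult_nth atLeast0AtMost)

lemma hom_fps_mult_prod_linear_factor: "hom_fps xs * prod_list (map linear_factor xs) = 1"
proof (induction xs rule: rev_induct)
  case Nil
  show ?case by (rule fps_ext) (simp add: hom_fps_def hom_Nil)
next
  case (snoc c xs)
  have "hom_fps (xs @ [c]) * prod_list (map linear_factor (xs @ [c])) =
      (linear_factor_inverse_power 0 c * linear_factor c) * (hom_fps xs * prod_list (map linear_factor xs))"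
    by (simp add: hom_fps_snoc algebra_simps)
  with snoc show ?case by (simp add: linear_factor_inverse_power_0_mult)
qed

lemma signed_elem_fps_snoc: "signed_elem_fps (xs @ [c]) = signed_elem_fps xs * linear_factor c"
proof (rule fps_ext)
  fix n show "signed_elem_fps (xs @ [c]) $ n = (signed_elem_fps xs * linear_factor c) $ n"
  proof (cases n)
    case (Suc k)
    have "(signed_elem_fps xs * linear_factor c) $ Suc k =
        signed_elem_fps xs $ Suc k - c * signed_elem_fps xs $ k"
      by (simp add: fps_mult_linear_factor_nth)
    with Suc show ?thesis
      using elem_snoc[of k xs c] by (simp add: signed_elem_fps_def algebra_simps del: of_nat_Suc)
  qed (simp add: fps_mult_linear_factor_nth signed_elem_fps_def elem_0)
qed

lemma signed_elem_fps_eq_prod_linear_factor: "signed_elem_fps xs = prod_list (map linear_factor xs)"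
proof (induction xs rule: rev_induct)
  case Nil
  have "signed_elem_fps [] $ n = (1 :: 'a fps) $ n" for n
    by (cases n) (simp_all add: signed_elem_fps_def elem_0 elem_gt_length del: of_nat_Suc)
  then show ?case by (simp add: fps_ext)
qed (simp add: signed_elem_fps_snoc)

lemma signed_elem_fps_mult_hom_fps:
  assumes "mset xs = mset ys + replicate_mset (Suc r) c"
  shows "signed_elem_fps ys * hom_fps xs = linear_factor_inverse_power r c"
proof -
  define E H P where "E = signed_elem_fps ys" "H = hom_fps xs" "P = linear_factor_inverse_power r c"
  have prod_mset: "prod_list (map linear_factor zs) = prod_mset (image_mset linear_factor (mset zs))"
    for zs :: "'a list"
    by (simp add: prod_mset_prod_list[symmetric])
  have "E * H * linear_factor c ^ Suc r = H * prod_list (map linear_factor xs)"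
    by (simp add: E_H_P_def signed_elem_fps_eq_prod_linear_factor prod_mset assms algebra_simps)
  also have "\<dots> = 1"
    by (simp add: E_H_P_def hom_fps_mult_prod_linear_factor)
  finally have EH: "E * H * linear_factor c ^ Suc r = 1" .
  have "E * H = E * H * (P * linear_factor c ^ Suc r)"
    by (simp only: E_H_P_def(3) linear_factor_inverse_power_mult_power mult_1_right)
  also have "\<dots> = (E * H * linear_factor c ^ Suc r) * P"
    by (simp only: ac_simps)
  finally have "E * H = P"
    by (simp only: EH mult_1_left)
  then show ?thesis
    by (simp only: E_H_P_def)
qed

lemma signed_elem_fps_mult_hom_fps_nth:
  "(signed_elem_fps ys * hom_fps xs) $ d =
     (\<Sum>s=0..int d. (-1) ^ nat s * elem s ys * hom (int d - s) xs)"
proof -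
  have "(\<Sum>s=0..int d. (-1) ^ nat s * elem s ys * hom (int d - s) xs) =
      (\<Sum>i=0..d. (-1) ^ i * elem (int i) ys * hom (int d - int i) xs)"
    by (simp add: image_int_atLeastAtMost[of 0 d, simplified, symmetric] sum.reindex)
  also have "\<dots> = (signed_elem_fps ys * hom_fps xs) $ d"
    by (auto simp: fps_mult_nth signed_elem_fps_def hom_fps_def of_nat_diff intro!: sum.cong)
  finally show ?thesis ..
qed

lemma rep_list_Suc: "rep_list (Suc n) y mu = rep_list n y mu @ replicate (mu (Suc n)) (y (Suc n))"
  by (simp add: rep_list_def)

lemma length_rep_list: "length (rep_list n y mu) = sum mu {1..n}"
  by (induction n) (simp_all add: rep_list_def[of 0] rep_list_Suc sum.nat_ivl_Suc')

lemma mset_rep_list: "mset (rep_list n y mu) = (\<Sum>q\<in>{1..n}. replicate_mset (mu q) (y q))"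
  by (induction n) (simp_all add: rep_list_def[of 0] rep_list_Suc sum.nat_ivl_Suc' add.commute)

lemma mset_rep_list_decrease:
  assumes "q \<in> {1..n}" and "r \<le> kappa q"
  shows "mset (rep_list n y kappa) = mset (rep_list n y (kappa(q := kappa q - r))) + replicate_mset r (y q)"
proof -
  have "replicate_mset (kappa q) (y q) = replicate_mset (kappa q - r) (y q) + replicate_mset r (y q)"
    using assms(2) by (simp add: multiset_eq_iff)
  moreover have "(\<Sum>q'\<in>{1..n} - {q}. replicate_mset ((kappa(q := kappa q - r)) q') (y q')) =
      (\<Sum>q'\<in>{1..n} - {q}. replicate_mset (kappa q') (y q'))"
    by (intro sum.cong) auto
  ultimately show ?thesis
    using assms(1) by (simp add: mset_rep_list sum.remove)
qed

lemma length_rep_list_decrease: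
  assumes "q \<in> {1..n}" and "r \<le> kappa q"
  shows "length (rep_list n y (kappa(q := kappa q - r))) + r = sum kappa {1..n}"
  using arg_cong[OF mset_rep_list_decrease[where kappa = kappa and y = y, OF assms], of size] by (simp add: length_rep_list)

lemma qr_block_le:
  fixes kappa :: "nat \<Rightarrow> nat"
  assumes "1 \<le> q" "r \<le> kappa q" "p = sum kappa {1..<q} + r"
    and "1 \<le> r'" "p = sum kappa {1..<q'} + r'"
  shows "q' \<le> q"
proof (rule ccontr)
  assume "\<not> q' \<le> q"
  then have "sum kappa {1..q} \<le> sum kappa {1..<q'}"
    by (intro sum_mono2) auto
  moreover have "sum kappa {1..q} = sum kappa {1..<q} + kappa q"
    using assms(1) by (simp add: sum.atLeastLessThan_Suc atLeastLessThanSuc_atLeastAtMost[symmetric])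
  ultimately show False
    using assms by linarith
qed

lemma qr_exists:
  fixes kappa :: "nat \<Rightarrow> nat"
  assumes "1 \<le> p" "p \<le> sum kappa {1..n}"
  shows "\<exists>q r. 1 \<le> q \<and> q \<le> n \<and> 1 \<le> r \<and> r \<le> kappa q \<and> p = sum kappa {1..<q} + r"
proof -
  define q where "q = (LEAST q. p \<le> sum kappa {1..q})"
  have p_le: "p \<le> sum kappa {1..q}"
    unfolding q_def by (rule LeastI[of _ n]) (use assms in auto)
  have "q \<le> n"
    unfolding q_def by (rule Least_le) (use assms in auto)
  have "1 \<le> q"
    using p_le assms by (cases q) auto
  have "\<not> p \<le> sum kappa {1..q - 1}"
    using \<open>1 \<le> q\<close> not_less_Least[of "q - 1" "\<lambda>q. p \<le> sum kappa {1..q}"] by (simp add: q_def)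
  moreover have "{1..q - 1} = {1..<q}" "sum kappa {1..q} = sum kappa {1..<q} + kappa q"
    using \<open>1 \<le> q\<close> by (auto simp: sum.atLeastLessThan_Suc atLeastLessThanSuc_atLeastAtMost[symmetric])
  ultimately show ?thesis
    using p_le \<open>1 \<le> q\<close> \<open>q \<le> n\<close> by (intro exI[of _ q] exI[of _ "p - sum kappa {1..<q}"]) auto
qed

lemma qr_bounds:
  fixes kappa :: "nat \<Rightarrow> nat"
  assumes "1 \<le> p" "p \<le> sum kappa {1..n}" and "qr n kappa p = (q, r)"
  shows "1 \<le> q \<and> q \<le> n \<and> 1 \<le> r \<and> r \<le> kappa q"
proof -
  define P where "P = (\<lambda>(q, r). 1 \<le> q \<and> q \<le> n \<and> 1 \<le> r \<and> r \<le> kappa q \<and> p = sum kappa {1..<q} + r)"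
  have "\<exists>!qr. P qr"
  proof (rule ex_ex1I)
    show "\<exists>qr. P qr"
      using qr_exists[OF assms(1,2)] by (auto simp: P_def)
  next
    fix qr1 qr2 assume "P qr1" "P qr2"
    obtain q1 r1 q2 r2 where qr: "qr1 = (q1, r1)" "qr2 = (q2, r2)"
      by (cases qr1, cases qr2)
    have first: "1 \<le> q1" "r1 \<le> kappa q1" "p = sum kappa {1..<q1} + r1" "1 \<le> r1"
      using \<open>P qr1\<close> by (simp_all only: P_def qr prod.case)
    have second: "1 \<le> q2" "r2 \<le> kappa q2" "p = sum kappa {1..<q2} + r2" "1 \<le> r2"
      using \<open>P qr2\<close> by (simp_all only: P_def qr prod.case)
    have "q1 = q2"
      using qr_block_le[OF second(1-3) first(4,3)] qr_block_le[OF first(1-3) second(4,3)]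
      by (rule antisym)
    with first(3) second(3) show "qr1 = qr2"
      by (simp add: qr)
  qed
  from theI'[OF this] have "P (qr n kappa p)"
    by (simp only: qr_def P_def)
  then show ?thesis
    by (simp add: P_def assms(3))
qed

section \<open>The matrix product as a convolution\<close>

lemma sum_reflected_eq_sum_support:
  fixes g :: "int \<Rightarrow> 'a::comm_monoid_add"
  assumes "1 \<le> r" and vanish: "\<And>s. s < 0 \<or> D < s \<or> int N - int r < s \<Longrightarrow> g s = 0"
  shows "(\<Sum>k=1..N. g (int N - int k - int r + 1)) = sum g {0..D}"
proof -
  have "(\<Sum>k=1..N. g (int N - int k - int r + 1)) = sum g {1 - int r..int N - int r}"
    by (rule sum.reindex_bij_witness[where i="\<lambda>s. nat (int N - int r + 1 - s)"
          and j="\<lambda>k. int N - int k - int r + 1"]) auto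
  also have "\<dots> = sum g ({1 - int r..int N - int r} \<inter> {0..D})"
    by (rule sum.mono_neutral_right) (auto intro: vanish)
  also have "\<dots> = sum g {0..D}"
    using assms(1) by (intro sum.mono_neutral_left) (auto intro: vanish)
  finally show ?thesis .
qed

lemma JT_mult_Mmat:
  assumes "qr n kappa p = (q, r)"
  shows "JT lam x j k * Mmat n y kappa k p =
    (let s = int (sum kappa {1..n}) - int k - int r + 1 in
       (-1) ^ nat s * elem s (rep_list n y (kappa(q := kappa q - r))) * hom (int (lam j) - int j + int k) x)"
  by (simp add: JT_def Mmat_def Let_def assms ac_simps)

lemma Gmat_eq_nth_linear_factor_inverse_power:
  assumes "qr n kappa p = (q, r)" and "1 \<le> r" and "j \<le> sum kappa {1..n}"
  shows "Gmat n lam y kappa j p =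
    (let D = int (sum kappa {1..n}) + int (lam j) - int j - int r + 1 in
       if 0 \<le> D then linear_factor_inverse_power (r - 1) (y q) $ nat D else 0)"
proof -
  have "nat (int (sum kappa {1..n}) + int (lam j) - int j - int r + 1) + (r - 1) = sum kappa {1..n} + lam j - j"
    if "0 \<le> int (sum kappa {1..n}) + int (lam j) - int j - int r + 1"
    using that assms(2,3) by linarith
  then show ?thesis
    by (simp add: Gmat_def Let_def assms(1) linear_factor_inverse_power_def)
qed

theorem proposition5p2:
  fixes n :: nat and kappa lam :: "nat \<Rightarrow> nat" and y :: "nat \<Rightarrow> 'a::comm_ring_1"
  defines "N \<equiv> sum kappa {1..n}"
  assumes "is_partition_len_le N lam"
  shows "\<forall>j\<in>{1..N}. \<forall>p\<in>{1..N}.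
           Gmat n lam y kappa j p =
           (\<Sum>k=1..N. JT lam (rep_list n y kappa) j k * Mmat n y kappa k p)"
proof (intro ballI)
  fix j p assume j: "j \<in> {1..N}" and p: "p \<in> {1..N}"
  obtain q r where qr: "qr n kappa p = (q, r)"
    by (cases "qr n kappa p")
  with p have "1 \<le> q \<and> q \<le> n \<and> 1 \<le> r \<and> r \<le> kappa q"
    by (intro qr_bounds) (auto simp: N_def)
  then have q: "q \<in> {1..n}" and r: "1 \<le> r" "r \<le> kappa q"
    by auto
  define x x' where "x = rep_list n y kappa" and "x' = rep_list n y (kappa(q := kappa q - r))"
  define D where "D = int N + int (lam j) - int j - int r + 1"
  define g where "g s = (-1) ^ nat s * elem s x' * hom (D - s) x" for s
  have mset: "mset x = mset x' + replicate_mset (Suc (r - 1)) (y q)"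
    using mset_rep_list_decrease[where kappa = kappa and y = y, OF q r(2)] r(1) by (simp add: x_def x'_def)
  have vanish: "g s = 0" if "s < 0 \<or> D < s \<or> int N - int r < s" for s
    using that elem_gt_length[of x' "nat s"]
      length_rep_list_decrease[where kappa = kappa and y = y, OF q r(2), folded x'_def N_def]
    by (auto simp: g_def hom_neg elem_neg)
  have "JT lam x j k * Mmat n y kappa k p = g (int N - int k - int r + 1)" for k
    by (simp add: JT_mult_Mmat[OF qr, folded N_def] g_def D_def x'_def Let_def algebra_simps)
  then have "(\<Sum>k=1..N. JT lam x j k * Mmat n y kappa k p) = (\<Sum>k=1..N. g (int N - int k - int r + 1))"
    by simp
  also have "\<dots> = sum g {0..D}"
    by (rule sum_reflected_eq_sum_support[OF r(1) vanish])
  also have "\<dots> = (if 0 \<le> D then (signed_elem_fps x' * hom_fps x) $ nat D else 0)"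
    by (simp add: signed_elem_fps_mult_hom_fps_nth g_def)
  also have "\<dots> = Gmat n lam y kappa j p"
    using j r(1)
    by (simp add: signed_elem_fps_mult_hom_fps[OF mset] Gmat_eq_nth_linear_factor_inverse_power[OF qr, folded N_def] D_def)
  finally show "Gmat n lam y kappa j p = (\<Sum>k=1..N. JT lam (rep_list n y kappa) j k * Mmat n y kappa k p)"
    by (simp add: x_def)
qed

end
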